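(* Let $\lambda$ be a partition, $T\in\mathcal{T}_\lambda$, let $Y\in\mathcal{T}_\lambda$ be a $\lambda$-key, and let $\pi$ be an $R_\lambda$-permutation. Then: (i) $S(T)$ is a $\lambda$-key (in particular $S(T)\in\mathcal{T}_\lambda$); (ii) $T\le S(T)$ and $S(Y)=Y$; (iii) $Y_\lambda(\pi)\in\mathcal{D}_\lambda(\pi)$ and $\mathcal{D}_\lambda(\pi)\subseteq[Y_\lambda(\pi)]$; (iv) $Y_\lambda(\pi)$ is the unique maximal element of $\mathcal{D}_\lambda(\pi)$; (v) the sets $\mathcal{D}_\lambda(\sigma)$, $\sigma$ ranging over the $R_\lambda$-permutations, are nonempty subsets of $\mathcal{T}_\lambda$ and are pairwise distinct.
   Context: Fix $n\ge1$; $[m]=\{1,\dots,m\}$. A partition is $\lambda=(\lambda_1\ge\cdots\ge\lambda_n\ge0)\in\mathbb{Z}^n$, with boxes $(j,i)$ (column $j$, row $i$), $1\le j\le\lambda_1$, $1\le i\le\zeta_j:=\#\{i:\lambda_i\ge j\}$; $R_\lambda:=\{\zeta_j:\zeta_j<n\}$ with elements $q_1<\dots<q_r$, $q_0:=0$, $q_{r+1}:=n$. An $R_\lambda$-permutation is a permutation $\pi$ of $[n]$ in one-line notation that is strictly increasing on each index set $\{q_{h-1}+1,\dots,q_h\}$. A tableau of shape $\lambda$ fills the boxes with values in $[n]$, strictly increasing down columns and weakly increasing along rows; $\mathcal{T}_\lambda$ is their set, ordered entrywise, and $[U]:=\{T\in\mathcal{T}_\lambda:T\le U\}$. $T_j(i)$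 is the entry at column $j$ row $i$; $B(T_j)$ the set of entries of column $j$. A $\lambda$-key is $Y\in\mathcal{T}_\lambda$ with $B(Y_l)\supseteq B(Y_j)$ for $l\le j$. The $\lambda$-key $Y_\lambda(\pi)$ is the tableau whose column $j$ consists of $\{\pi_1,\dots,\pi_{\zeta_j}\}$ in increasing order. Scanning tableau: the earliest weakly increasing subsequence (EWIS) of a sequence $x_1,x_2,\dots$ is $x_{i_1},x_{i_2},\dots$ with $i_1=1$ and $i_u$ the smallest index $>i_{u-1}$ with $x_{i_u}\ge x_{i_{u-1}}$. For $T\in\mathcal{T}_\lambda$ and $l\in[\lambda_1]$, column $l$ of $S(T)$ is computed as follows: consider the boxes of $T$ in columns $l,l+1,\dots,\lambda_1$, all initially unmarked; for $k=\zeta_l,\zeta_l-1,\dots,1$ in turn, form the sequence of the lowest unmarked entries of the columns $l,l+1,\dots$ (from left to right, over the columns still having unmarked boxes; the unmarked boxes always form a partition shape), take its EWIS, mark the boxes contributing to it (this set of boxes is the scanning path $\mathcal{P}(T;l,k)$), and set the entry of $S(T)$ at column $l$, row $k$ to be the last term of this EWIS. The set of Demazure tableaux is $\mathcal{D}_\lambda(\pi):=\{T\in\mathcal{T}_\lambda: S(T)\le Y_\lambda(\pi)\}$. *)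

theory Defs
  imports "HOL-Combinatorics.Permutations"
begin

(* A partition lam = (lam 1 >= ... >= lam n >= 0); only the values lam 1, ..., lam n matter. *)
definition is_partition :: "nat \<Rightarrow> (nat \<Rightarrow> nat) \<Rightarrow> bool" where
  "is_partition n lam \<longleftrightarrow> (\<forall>i. 1 \<le> i \<and> i < n \<longrightarrow> lam (Suc i) \<le> lam i)"

(* zeta_j = #{i in [n]. lam_i >= j}, the length of column j *)
definition zeta :: "nat \<Rightarrow> (nat \<Rightarrow> nat) \<Rightarrow> nat \<Rightarrow> nat" where
  "zeta n lam j = card {i \<in> {1..n}. j \<le> lam i}"

(* box (j,i): column j, row i *)
definition in_shape :: "nat \<Rightarrow> (nat \<Rightarrow> nat) \<Rightarrow> nat \<Rightarrow> nat \<Rightarrow> bool" where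
  "in_shape n lam j i \<longleftrightarrow> 1 \<le> j \<and> j \<le> lam 1 \<and> 1 \<le> i \<and> i \<le> zeta n lam j"

definition R_set :: "nat \<Rightarrow> (nat \<Rightarrow> nat) \<Rightarrow> nat set" where
  "R_set n lam = {zeta n lam j | j. 1 \<le> j \<and> j \<le> lam 1 \<and> zeta n lam j < n}"

(* R_lam-permutation: a permutation of [n] (identity outside [n]), strictly increasing on
   each block {q_(h-1)+1, ..., q_h}; indices i < i' lie in the same block iff no q in R_lam
   satisfies i <= q < i'. *)
definition R_perm :: "nat \<Rightarrow> (nat \<Rightarrow> nat) \<Rightarrow> (nat \<Rightarrow> nat) \<Rightarrow> bool" where
  "R_perm n lam \<pi> \<longleftrightarrow> \<pi> permutes {1..n} \<and>
     (\<forall>i i'. 1 \<le> i \<and> i < i' \<and> i' \<le> n \<and> (\<forall>q\<in>R_set n lam. \<not> (i \<le> q \<and> q < i'))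
        \<longrightarrow> \<pi> i < \<pi> i')"

(* Tableaux: T j i is the entry in column j, row i; by convention 0 outside the shape. *)
definition tableau :: "nat \<Rightarrow> (nat \<Rightarrow> nat) \<Rightarrow> (nat \<Rightarrow> nat \<Rightarrow> nat) \<Rightarrow> bool" where
  "tableau n lam T \<longleftrightarrow>
     (\<forall>j i. in_shape n lam j i \<longrightarrow> 1 \<le> T j i \<and> T j i \<le> n) \<and>
     (\<forall>j i. \<not> in_shape n lam j i \<longrightarrow> T j i = 0) \<and>
     (\<forall>j i. in_shape n lam j (Suc i) \<longrightarrow> T j i < T j (Suc i)) \<and>
     (\<forall>j i. in_shape n lam (Suc j) i \<longrightarrow> T j i \<le> T (Suc j) i)"

definition tableaux :: "nat \<Rightarrow> (nat \<Rightarrow> nat) \<Rightarrow> (nat \<Rightarrow> nat \<Rightarrow> nat) set" where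
  "tableaux n lam = {T. tableau n lam T}"

definition tab_le :: "(nat \<Rightarrow> nat \<Rightarrow> nat) \<Rightarrow> (nat \<Rightarrow> nat \<Rightarrow> nat) \<Rightarrow> bool" where
  "tab_le T U \<longleftrightarrow> (\<forall>j i. T j i \<le> U j i)"

definition below :: "nat \<Rightarrow> (nat \<Rightarrow> nat) \<Rightarrow> (nat \<Rightarrow> nat \<Rightarrow> nat) \<Rightarrow> (nat \<Rightarrow> nat \<Rightarrow> nat) set" where
  "below n lam U = {T \<in> tableaux n lam. tab_le T U}"

definition col_set :: "nat \<Rightarrow> (nat \<Rightarrow> nat) \<Rightarrow> (nat \<Rightarrow> nat \<Rightarrow> nat) \<Rightarrow> nat \<Rightarrow> nat set" where
  "col_set n lam T j = {T j i | i. 1 \<le> i \<and> i \<le> zeta n lam j}"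

definition is_key :: "nat \<Rightarrow> (nat \<Rightarrow> nat) \<Rightarrow> (nat \<Rightarrow> nat \<Rightarrow> nat) \<Rightarrow> bool" where
  "is_key n lam Y \<longleftrightarrow> tableau n lam Y \<and>
     (\<forall>l j. 1 \<le> l \<and> l \<le> j \<and> j \<le> lam 1 \<longrightarrow> col_set n lam Y j \<subseteq> col_set n lam Y l)"

definition key_of :: "nat \<Rightarrow> (nat \<Rightarrow> nat) \<Rightarrow> (nat \<Rightarrow> nat) \<Rightarrow> nat \<Rightarrow> nat \<Rightarrow> nat" where
  "key_of n lam \<pi> j i =
     (if in_shape n lam j i then sorted_list_of_set (\<pi> ` {1..zeta n lam j}) ! (i - 1) else 0)"

(* Earliest weakly increasing subsequence, on a sequence of (column, value) pairs,
   compared by value. *)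
fun ewis_from :: "nat \<Rightarrow> (nat \<times> nat) list \<Rightarrow> (nat \<times> nat) list" where
  "ewis_from a [] = []"
| "ewis_from a (p # ps) = (if a \<le> snd p then p # ewis_from (snd p) ps else ewis_from a ps)"

fun ewis :: "(nat \<times> nat) list \<Rightarrow> (nat \<times> nat) list" where
  "ewis [] = []"
| "ewis (p # ps) = p # ewis_from (snd p) ps"

(* The unmarked boxes are described by heights h c (number of unmarked boxes of column c).
   The sequence of lowest unmarked entries over the columns still having unmarked boxes: *)
definition scan_seq :: "(nat \<Rightarrow> nat \<Rightarrow> nat) \<Rightarrow> nat list \<Rightarrow> (nat \<Rightarrow> nat) \<Rightarrow> (nat \<times> nat) list" where
  "scan_seq T cols h = [(c, T c (h c)). c \<leftarrow> cols, 0 < h c]"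

definition scan_step :: "(nat \<Rightarrow> nat \<Rightarrow> nat) \<Rightarrow> nat list \<Rightarrow> (nat \<Rightarrow> nat) \<Rightarrow> (nat \<Rightarrow> nat)" where
  "scan_step T cols h =
     (let P = ewis (scan_seq T cols h) in (\<lambda>c. if c \<in> fst ` set P then h c - 1 else h c))"

definition scan_cols :: "(nat \<Rightarrow> nat) \<Rightarrow> nat \<Rightarrow> nat list" where
  "scan_cols lam l = [l..<Suc (lam 1)]"

definition scan_heights :: "nat \<Rightarrow> (nat \<Rightarrow> nat) \<Rightarrow> (nat \<Rightarrow> nat \<Rightarrow> nat) \<Rightarrow> nat \<Rightarrow> nat \<Rightarrow> (nat \<Rightarrow> nat)" where
  "scan_heights n lam T l m =
     ((scan_step T (scan_cols lam l)) ^^ m) (\<lambda>c. if l \<le> c \<and> c \<le> lam 1 then zeta n lam c else 0)"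

(* scanning path P(T;l,k), as list of (column, entry); the box in column c is its lowest
   unmarked box at that moment. Row k is handled after zeta_l - k earlier steps. *)
definition scan_path :: "nat \<Rightarrow> (nat \<Rightarrow> nat) \<Rightarrow> (nat \<Rightarrow> nat \<Rightarrow> nat) \<Rightarrow> nat \<Rightarrow> nat \<Rightarrow> (nat \<times> nat) list" where
  "scan_path n lam T l k =
     ewis (scan_seq T (scan_cols lam l) (scan_heights n lam T l (zeta n lam l - k)))"

definition scan :: "nat \<Rightarrow> (nat \<Rightarrow> nat) \<Rightarrow> (nat \<Rightarrow> nat \<Rightarrow> nat) \<Rightarrow> nat \<Rightarrow> nat \<Rightarrow> nat" where
  "scan n lam T l k = (if in_shape n lam l k then snd (last (scan_path n lam T l k)) else 0)"

definition demazure :: "nat \<Rightarrow> (nat \<Rightarrow> nat) \<Rightarrow> (nat \<Rightarrow> nat) \<Rightarrow> (nat \<Rightarrow> nat \<Rightarrow> nat) set" where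
  "demazure n lam \<pi> = {T \<in> tableaux n lam. tab_le (scan n lam T) (key_of n lam \<pi>)}"

definition is_maximal_in :: "(nat \<Rightarrow> nat \<Rightarrow> nat) set \<Rightarrow> (nat \<Rightarrow> nat \<Rightarrow> nat) \<Rightarrow> bool" where
  "is_maximal_in D U \<longleftrightarrow> U \<in> D \<and> (\<forall>V\<in>D. tab_le U V \<longrightarrow> V = U)"

end

theory Submission
  imports Defs
begin

text \<open>Column \<open>l\<close> of \<open>S(T)\<close> is produced by repeatedly removing the EWIS of the bottom entries
  of columns \<open>l, l + 1, \<dots>\<close>; the value recorded is the last term of the EWIS, i.e. the maximum
  of these bottom entries. Removing the maximum-attaining path makes the recorded values strictly
  increasing, and they dominate \<open>T\<close>. The heart of the matter is that removing an EWIS started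
  above an arbitrary threshold changes the next \<open>k\<close> recorded values by at most the single value
  it ends in. Scanning from column \<open>l\<close> instead of \<open>l + 1\<close> amounts to such thresholded removals,
  so column \<open>l + 1\<close> of \<open>S(T)\<close> is a subset of column \<open>l\<close>: \<open>S(T)\<close> is a key. For a key every
  recorded value is an entry of its own column, which forces \<open>S(Y) = Y\<close>. Finally \<open>Y\<^sub>\<lambda>(\<pi>)\<close>
  determines the sets \<open>\<pi>{1, \<dots>, q}\<close> for \<open>q \<in> R\<^sub>\<lambda>\<close>, hence \<open>\<pi>\<close> on each block where it increases;
  so distinct \<open>R\<^sub>\<lambda>\<close>-permutations have distinct keys, and thus distinct Demazure sets,
  each of which has its key as maximum.\<close>

section \<open>Earliest weakly increasing subsequences\<close>

lemma ewis_eq_ewis_from_0: "ewis xs = ewis_from 0 xs"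
  by (cases xs) auto

lemma scan_seq_Nil [simp]: "scan_seq T [] h = []"
  by (simp add: scan_seq_def)

lemma scan_seq_Cons:
  "scan_seq T (d # ds) h = (if 0 < h d then (d, T d (h d)) # scan_seq T ds h else scan_seq T ds h)"
  by (simp add: scan_seq_def)

lemma set_scan_seq: "set (scan_seq T cs h) = (\<lambda>c. (c, T c (h c))) ` {c \<in> set cs. 0 < h c}"
  by (induction cs) (auto simp: scan_seq_Cons)

lemma mem_ewis_from_scan_seq_iff:
  assumes "sorted_wrt (<) cs"
  shows "c \<in> fst ` set (ewis_from a (scan_seq T cs h)) \<longleftrightarrow>
    c \<in> set cs \<and> 0 < h c \<and> a \<le> T c (h c) \<and>
    (\<forall>c'\<in>set cs. c' < c \<and> 0 < h c' \<longrightarrow> T c' (h c') \<le> T c (h c))"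
  using assms
proof (induction cs arbitrary: a)
  case Nil
  then show ?case by simp
next
  case (Cons d ds)
  have d_first: "\<forall>x\<in>set ds. d < x"
    using Cons.prems by simp
  from Cons.prems have "sorted_wrt (<) ds"
    by simp
  note IH = Cons.IH[OF this]
  consider "0 < h d" "a \<le> T d (h d)" | "\<not> (0 < h d \<and> a \<le> T d (h d))"
    by auto
  then show ?case
  proof cases
    case 1
    then show ?thesis
      using IH[of "T d (h d)"] d_first by (auto simp: scan_seq_Cons intro: order_trans)
  next
    case 2
    then show ?thesis
      using IH[of a] d_first by (auto simp: scan_seq_Cons)
  qed
qed

lemma last_ewis_from: "snd (last ((c, a) # ewis_from a ps)) = Max (insert a (snd ` set ps))"
proof (induction ps arbitrary: c a)
  case Nil
  then show ?case by simp
next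
  case (Cons p ps)
  show ?case
  proof (cases "a \<le> snd p")
    case True
    then have "snd (last ((c, a) # ewis_from a (p # ps))) = Max (insert (snd p) (snd ` set ps))"
      using Cons.IH[of "fst p" "snd p"] by simp
    also have "\<dots> = Max (insert a (snd ` set (p # ps)))"
      using True by (simp add: max_def)
        (meson Max_ge finite_imageI finite_insert finite_set insertI1 order_trans)
    finally show ?thesis .
  next
    case False
    have "a \<le> Max (insert a (snd ` set ps))"
      by simp
    then have "snd p \<le> Max (insert a (snd ` set ps))"
      using False by linarith
    then have "Max (insert (snd p) (insert a (snd ` set ps))) = Max (insert a (snd ` set ps))"
      by (simp add: max_def)
    then have "Max (insert a (snd ` set (p # ps))) = Max (insert a (snd ` set ps))"
      by (simp add: insert_commute)
    then show ?thesis
      using False Cons.IH[of c a] by simp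
  qed
qed

section \<open>Scanning paths\<close>

text \<open>A state of the scanning procedure is a height function \<open>h\<close>: boxes \<open>1, \<dots>, h c\<close> of column
  \<open>c\<close> are still unmarked, so the lowest unmarked entry of column \<open>c\<close> is \<open>T c (h c)\<close>.
  \<open>path C a h\<close> is the set of columns visited by the EWIS of these entries (columns of \<open>C\<close> in
  increasing order) when it must start at a value \<open>\<ge> a\<close>, see \<open>mem_ewis_from_scan_seq_iff\<close>; its last
  value is \<open>path_end C a h\<close> (which is \<open>a\<close> if the path is empty). \<open>outputs C k h\<close> is the set of
  the first \<open>k\<close> values recorded when such paths are removed one after another.\<close>

locale strict_columns =
  fixes T :: "nat \<Rightarrow> nat \<Rightarrow> nat" and Z :: "nat \<Rightarrow> nat"
  assumes column_strict: "0 < i \<Longrightarrow> Suc i \<le> Z c \<Longrightarrow> T c i < T c (Suc i)"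
begin

definition admissible :: "nat set \<Rightarrow> (nat \<Rightarrow> nat) \<Rightarrow> bool" where
  "admissible C h \<longleftrightarrow> (\<forall>c\<in>C. h c \<le> Z c)"

definition lower :: "(nat \<Rightarrow> nat) \<Rightarrow> nat set \<Rightarrow> nat \<Rightarrow> nat" where
  "lower h P c = (if c \<in> P then h c - 1 else h c)"

definition path :: "nat set \<Rightarrow> nat \<Rightarrow> (nat \<Rightarrow> nat) \<Rightarrow> nat set" where
  "path C a h = {c \<in> C. 0 < h c \<and> a \<le> T c (h c) \<and>
      (\<forall>c'\<in>C. c' < c \<and> 0 < h c' \<longrightarrow> T c' (h c') \<le> T c (h c))}"

definition remove_path :: "nat set \<Rightarrow> nat \<Rightarrow> (nat \<Rightarrow> nat) \<Rightarrow> nat \<Rightarrow> nat" where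
  "remove_path C a h = lower h (path C a h)"

definition bottoms :: "nat set \<Rightarrow> (nat \<Rightarrow> nat) \<Rightarrow> nat set" where
  "bottoms C h = (\<lambda>c. T c (h c)) ` {c \<in> C. 0 < h c}"

definition path_end :: "nat set \<Rightarrow> nat \<Rightarrow> (nat \<Rightarrow> nat) \<Rightarrow> nat" where
  "path_end C a h = Max (insert a (bottoms C h))"

definition outputs :: "nat set \<Rightarrow> nat \<Rightarrow> (nat \<Rightarrow> nat) \<Rightarrow> nat set" where
  "outputs C k h = (\<lambda>m. path_end C 0 ((remove_path C 0 ^^ m) h)) ` {..<k}"

definition max_bottom :: "(nat \<Rightarrow> nat) \<Rightarrow> nat set \<Rightarrow> nat" where
  "max_bottom h P = Max ((\<lambda>c. T c (h c)) ` P)"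

definition initial_segment :: "nat set \<Rightarrow> (nat \<Rightarrow> nat) \<Rightarrow> nat set \<Rightarrow> bool" where
  "initial_segment C h P \<longleftrightarrow> P \<subseteq> path C 0 h \<and> (\<forall>c\<in>P. \<forall>c'\<in>path C 0 h. c' < c \<longrightarrow> c' \<in> P)"

lemma finite_bottoms: "finite C \<Longrightarrow> finite (bottoms C h)"
  unfolding bottoms_def by simp

lemma bottom_le_path_end: "finite C \<Longrightarrow> c \<in> C \<Longrightarrow> 0 < h c \<Longrightarrow> T c (h c) \<le> path_end C a h"
  unfolding path_end_def bottoms_def by simp

lemma admissible_lower: "admissible C h \<Longrightarrow> admissible C (lower h P)"
  unfolding admissible_def lower_def by auto

lemma admissible_remove_path: "admissible C h \<Longrightarrow> admissible C (remove_path C a h)"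
  unfolding remove_path_def by (rule admissible_lower)

lemma lower_empty [simp]: "lower h {} = h"
  unfolding lower_def by simp

lemma lower_notin: "c \<notin> P \<Longrightarrow> lower h P c = h c"
  unfolding lower_def by simp

lemma pos_of_lower_pos: "0 < lower h P c \<Longrightarrow> 0 < h c"
  unfolding lower_def by (auto split: if_splits)

lemma lower_bottom_less:
  assumes "admissible C h" "c \<in> C" "0 < lower h P c" "c \<in> P"
  shows "T c (lower h P c) < T c (h c)"
proof -
  have "0 < h c - 1" "Suc (h c - 1) \<le> Z c"
    using assms unfolding admissible_def lower_def by auto
  then show ?thesis
    using column_strict[of "h c - 1" c] assms(4) by (simp add: lower_def)
qed

lemma lower_bottom_le:
  "admissible C h \<Longrightarrow> c \<in> C \<Longrightarrow> 0 < lower h P c \<Longrightarrow> T c (lower h P c) \<le> T c (h c)"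
  using lower_bottom_less[of C h c P] by (cases "c \<in> P") (auto simp: lower_notin)

lemma path_subset: "path C a h \<subseteq> C"
  unfolding path_def by auto

lemma remove_path_eq_self: "path C a h = {} \<Longrightarrow> remove_path C a h = h"
  unfolding remove_path_def by simp

lemma path_threshold: "path C a h = {c \<in> path C 0 h. a \<le> T c (h c)}"
  unfolding path_def by auto

lemma path_end_threshold:
  assumes "finite C" "path C a h \<noteq> {}"
  shows "path_end C a h = path_end C 0 h"
proof -
  obtain c where "c \<in> path C a h"
    using assms(2) by auto
  then have "T c (h c) \<in> bottoms C h" "a \<le> T c (h c)"
    unfolding path_def bottoms_def by auto
  then show ?thesis
    using finite_bottoms[OF assms(1)] unfolding path_end_def
    by (metis Max_ge Max_insert empty_iff max.absorb2 max_0L order_trans)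
qed

lemma outputs_Suc: "outputs C (Suc k) h = insert (path_end C 0 h) (outputs C k (remove_path C 0 h))"
  unfolding outputs_def lessThan_Suc_eq_insert_0 image_insert image_image
  by (simp add: funpow_Suc_right del: funpow.simps)

lemma outputs_mono: "k \<le> k' \<Longrightarrow> outputs C k h \<subseteq> outputs C k' h"
  unfolding outputs_def by auto

lemma max_bottom_initial_segment:
  assumes "finite C" "initial_segment C g P" "P \<noteq> {}"
  shows max_bottom_ge: "\<And>c. c \<in> P \<Longrightarrow> T c (g c) \<le> max_bottom g P"
    and max_bottom_attained: "\<exists>c\<in>P. max_bottom g P = T c (g c)"
proof -
  have "finite P"
    using assms(1,2) path_subset unfolding initial_segment_def by (meson finite_subset order_trans)
  then show "\<And>c. c \<in> P \<Longrightarrow> T c (g c) \<le> max_bottom g P"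
    unfolding max_bottom_def by simp
  have "max_bottom g P \<in> (\<lambda>c. T c (g c)) ` P"
    unfolding max_bottom_def using \<open>finite P\<close> assms(3) by (intro Max_in) auto
  then show "\<exists>c\<in>P. max_bottom g P = T c (g c)"
    by auto
qed

lemma path_lower_initial_segment_subset:
  assumes fin: "finite C" and adm: "admissible C g" and seg: "initial_segment C g P"
    and ne: "P \<noteq> {}"
  shows "path C (max_bottom g P) (lower g P) \<subseteq> path C 0 g - P"
proof
  let ?v = "max_bottom g P" and ?g = "lower g P"
  note le_v = max_bottom_ge[OF fin seg ne]
  fix c assume "c \<in> path C ?v ?g"
  then have cC: "c \<in> C" and pos: "0 < ?g c" and v_le: "?v \<le> T c (?g c)"
    and before: "\<forall>c'\<in>C. c' < c \<and> 0 < ?g c' \<longrightarrow> T c' (?g c') \<le> T c (?g c)"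
    unfolding path_def by auto
  have "c \<notin> P"
  proof
    assume "c \<in> P"
    then have "T c (?g c) < T c (g c)"
      using lower_bottom_less[OF adm cC pos] by simp
    then show False
      using le_v[OF \<open>c \<in> P\<close>] v_le by simp
  qed
  then have g_c: "?g c = g c"
    by (rule lower_notin)
  have "T c' (g c') \<le> T c (g c)" if "c' \<in> C" "c' < c" "0 < g c'" for c'
  proof (cases "c' \<in> P")
    case True
    then show ?thesis
      using le_v v_le g_c by (metis order_trans)
  next
    case False
    then have "?g c' = g c'"
      by (rule lower_notin)
    then show ?thesis
      using before that g_c by force
  qed
  then show "c \<in> path C 0 g - P"
    using cC pos g_c \<open>c \<notin> P\<close> unfolding path_def by auto
qed

lemma path_lower_initial_segment_supset:
  assumes fin: "finite C" and adm: "admissible C g" and seg: "initial_segment C g P"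
    and ne: "P \<noteq> {}"
  shows "path C 0 g - P \<subseteq> path C (max_bottom g P) (lower g P)"
proof
  let ?v = "max_bottom g P" and ?g = "lower g P"
  obtain cp where cp: "cp \<in> P" "?v = T cp (g cp)"
    using max_bottom_attained[OF fin seg ne] by blast
  fix c assume c: "c \<in> path C 0 g - P"
  then have cC: "c \<in> C" and pos: "0 < g c"
    and before: "\<forall>c'\<in>C. c' < c \<and> 0 < g c' \<longrightarrow> T c' (g c') \<le> T c (g c)"
    unfolding path_def by auto
  have g_c: "?g c = g c"
    using c by (simp add: lower_notin)
  have "cp \<noteq> c" "\<not> c < cp"
    using c cp seg unfolding initial_segment_def by auto
  then have "?v \<le> T c (g c)"
    using before cp seg path_subset unfolding initial_segment_def path_def by auto
  moreover have "T c' (?g c') \<le> T c (g c)" if "c' \<in> C" "c' < c" "0 < ?g c'" for c'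
  proof -
    have "T c' (?g c') \<le> T c' (g c')"
      using lower_bottom_le[OF adm that(1,3)] .
    also have "\<dots> \<le> T c (g c)"
      using before that(1,2) pos_of_lower_pos[OF that(3)] by blast
    finally show ?thesis .
  qed
  ultimately show "c \<in> path C ?v ?g"
    using cC pos g_c unfolding path_def by auto
qed

lemma bottoms_lower_le:
  assumes "admissible C h" "x \<in> bottoms C (lower h P)"
  shows "\<exists>y\<in>bottoms C h. x \<le> y"
proof -
  obtain c where c: "c \<in> C" "0 < lower h P c" "x = T c (lower h P c)"
    using assms(2) unfolding bottoms_def by auto
  then have "T c (h c) \<in> bottoms C h"
    using pos_of_lower_pos unfolding bottoms_def by blast
  then show ?thesis
    using lower_bottom_le[OF assms(1) c(1,2)] c(3) by blast
qed

lemma bottoms_subset_lower: "bottoms C h \<subseteq> bottoms C (lower h P) \<union> (\<lambda>c. T c (h c)) ` P"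
proof
  fix y assume "y \<in> bottoms C h"
  then obtain c where c: "c \<in> C" "0 < h c" "y = T c (h c)"
    unfolding bottoms_def by auto
  show "y \<in> bottoms C (lower h P) \<union> (\<lambda>c. T c (h c)) ` P"
  proof (cases "c \<in> P")
    case False
    then have "lower h P c = h c"
      by (rule lower_notin)
    then show ?thesis
      using c unfolding bottoms_def by (auto intro!: image_eqI[of _ _ c])
  qed (use c in simp)
qed

lemma path_end_lower_initial_segment:
  assumes fin: "finite C" and adm: "admissible C g" and seg: "initial_segment C g P"
    and ne: "P \<noteq> {}"
  shows "path_end C (max_bottom g P) (lower g P) = path_end C 0 g"
proof -
  let ?v = "max_bottom g P"
  have "?v \<in> bottoms C g"
    using max_bottom_attained[OF fin seg ne] seg
    unfolding initial_segment_def path_def bottoms_def by auto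
  then have "\<forall>x\<in>insert ?v (bottoms C (lower g P)). \<exists>y\<in>insert 0 (bottoms C g). x \<le> y"
    using bottoms_lower_le[OF adm] by blast
  moreover have "\<forall>y\<in>insert 0 (bottoms C g). \<exists>x\<in>insert ?v (bottoms C (lower g P)). y \<le> x"
  proof
    fix y assume "y \<in> insert 0 (bottoms C g)"
    then consider "y = 0" | "y \<in> bottoms C (lower g P)" | c where "c \<in> P" "y = T c (g c)"
      using bottoms_subset_lower[of C g P] by blast
    then show "\<exists>x\<in>insert ?v (bottoms C (lower g P)). y \<le> x"
      using max_bottom_ge[OF fin seg ne] by cases auto
  qed
  ultimately show ?thesis
    unfolding path_end_def by (intro Max_eq_if) (simp_all add: finite_bottoms fin)
qed

lemma remove_path_lower_initial_segment:
  assumes "finite C" "admissible C g" "initial_segment C g P" "P \<noteq> {}"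
  shows "remove_path C (max_bottom g P) (lower g P) = remove_path C 0 g"
proof
  fix c
  have "path C (max_bottom g P) (lower g P) = path C 0 g - P"
    using path_lower_initial_segment_subset[OF assms] path_lower_initial_segment_supset[OF assms]
    by (rule subset_antisym)
  moreover have "P \<subseteq> path C 0 g"
    using assms(3) unfolding initial_segment_def by blast
  ultimately show "remove_path C (max_bottom g P) (lower g P) c = remove_path C 0 g c"
    unfolding remove_path_def lower_def by (cases "c \<in> P") auto
qed

lemma remove_path_below_threshold: "T c (h c) < a \<Longrightarrow> remove_path C a h c = h c"
  unfolding remove_path_def path_def lower_def by auto

lemma lower_remove_path_below_threshold:
  "lower (remove_path C a h) {c \<in> path C 0 h. T c (h c) < a} = remove_path C 0 h"
  unfolding remove_path_def lower_def path_threshold[of C a h] by (auto intro!: ext)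

lemma path_remove_path_below_threshold:
  assumes adm: "admissible C h" and c_path: "c \<in> path C 0 h" and c_low: "T c (h c) < a"
  shows "c \<in> path C 0 (remove_path C a h)"
proof -
  let ?h = "remove_path C a h"
  have h_c: "?h c = h c"
    using c_low by (rule remove_path_below_threshold)
  have "T c' (?h c') \<le> T c (?h c)" if "c' \<in> C" "c' < c" "0 < ?h c'" for c'
  proof -
    have "0 < h c'"
      using that(3) pos_of_lower_pos unfolding remove_path_def by blast
    have "T c' (?h c') \<le> T c' (h c')"
      using lower_bottom_le[OF adm that(1)] that(3) unfolding remove_path_def by blast
    also have "\<dots> \<le> T c (h c)"
      using c_path that(1,2) \<open>0 < h c'\<close> unfolding path_def by blast
    finally show ?thesis
      using h_c by simp
  qed
  then show ?thesis
    using c_path h_c unfolding path_def by auto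
qed

lemma path_before_low_column:
  assumes c_path: "c \<in> path C 0 h" and c_low: "T c (h c) < a"
    and c'_path: "c' \<in> path C 0 (remove_path C a h)" and "c' < c"
  shows "c' \<in> path C 0 h \<and> T c' (h c') < a"
proof -
  let ?h = "remove_path C a h"
  have before: "T c' (h c') \<le> T c (h c)" if "c' \<in> C" "c' < c" "0 < h c'" for c'
    using c_path that unfolding path_def by auto
  have c'C: "c' \<in> C" and "0 < ?h c'"
    and before': "\<forall>c''\<in>C. c'' < c' \<and> 0 < ?h c'' \<longrightarrow> T c'' (?h c'') \<le> T c' (?h c')"
    using c'_path unfolding path_def by auto
  then have pos: "0 < h c'"
    using pos_of_lower_pos unfolding remove_path_def by blast
  have c'_le: "T c' (h c') \<le> T c (h c)"
    using before c'C \<open>c' < c\<close> pos by blast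
  then have h_c': "?h c' = h c'"
    using c_low by (intro remove_path_below_threshold) simp
  have "T c'' (h c'') \<le> T c' (h c')" if "c'' \<in> C" "c'' < c'" "0 < h c''" for c''
  proof -
    have "T c'' (h c'') \<le> T c (h c)"
      using before that \<open>c' < c\<close> by (meson order.strict_trans)
    then have h_c'': "?h c'' = h c''"
      using c_low by (intro remove_path_below_threshold) simp
    have "T c'' (?h c'') \<le> T c' (?h c')"
      using before' that(1,2) that(3)[folded h_c''] by blast
    then show ?thesis
      using h_c' h_c'' by simp
  qed
  then show ?thesis
    using c'C pos c'_le c_low unfolding path_def by auto
qed

lemma initial_segment_below_threshold:
  "admissible C h \<Longrightarrow> initial_segment C (remove_path C a h) {c \<in> path C 0 h. T c (h c) < a}"
  unfolding initial_segment_def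
  using path_remove_path_below_threshold path_before_low_column by blast

text \<open>The part of the threshold-\<open>0\<close> path lying below \<open>a\<close> survives the removal of
  \<open>path C a h\<close> as an initial segment of the next path, and removing an initial segment only
  shifts the scan by one step; by induction on \<open>k\<close>, removing a path thus loses at most one
  of the next \<open>k\<close> outputs, namely its end value.\<close>

lemma outputs_remove_path_subset:
  assumes fin: "finite C" and adm: "admissible C h"
  shows "outputs C k h \<subseteq> insert (path_end C a h) (outputs C k (remove_path C a h))"
  using adm
proof (induction k arbitrary: h a)
  case 0
  then show ?case
    unfolding outputs_def by simp
next
  case (Suc k)
  show ?case
  proof (cases "path C a h = {}")
    case True
    then show ?thesis
      using remove_path_eq_self by auto
  next
    case False
    define h' where "h' = remove_path C a h"
    define P where "P = {c \<in> path C 0 h. T c (h c) < a}"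
    have adm': "admissible C h'"
      unfolding h'_def by (rule admissible_remove_path[OF Suc.prems])
    have "outputs C k (lower h' P) \<subseteq> outputs C (Suc k) h'"
    proof (cases "P = {}")
      case True
      then show ?thesis
        by (simp add: outputs_mono)
    next
      case False
      have seg: "initial_segment C h' P"
        unfolding h'_def P_def by (rule initial_segment_below_threshold[OF Suc.prems])
      show ?thesis
        using Suc.IH[where a = "max_bottom h' P", OF admissible_lower[OF adm'], of P]
          path_end_lower_initial_segment[OF fin adm' seg False]
          remove_path_lower_initial_segment[OF fin adm' seg False]
        by (simp add: outputs_Suc)
    qed
    moreover have "lower h' P = remove_path C 0 h"
      unfolding h'_def P_def by (rule lower_remove_path_below_threshold)
    ultimately show ?thesis
      using outputs_Suc[of C k h] path_end_threshold[OF fin False] outputs_mono[of k "Suc k"]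
      unfolding h'_def by auto
  qed
qed


lemma path_cong: "(\<And>c. c \<in> C \<Longrightarrow> h c = g c) \<Longrightarrow> path C a h = path C a g"
  unfolding path_def by auto

lemma remove_path_cong:
  "(\<And>c. c \<in> C \<Longrightarrow> h c = g c) \<Longrightarrow> c \<in> C \<Longrightarrow> remove_path C a h c = remove_path C a g c"
  using path_cong[of C h g a] unfolding remove_path_def lower_def by auto

lemma path_end_cong:
  assumes "\<And>c. c \<in> C \<Longrightarrow> h c = g c"
  shows "path_end C a h = path_end C a g"
proof -
  have "{c \<in> C. 0 < h c} = {c \<in> C. 0 < g c}"
    using assms by auto
  then have "bottoms C h = bottoms C g"
    unfolding bottoms_def using assms by (intro image_cong) auto
  then show ?thesis
    unfolding path_end_def by simp
qed

lemma remove_path_power_cong: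
  "(\<And>c. c \<in> C \<Longrightarrow> h c = g c) \<Longrightarrow> c \<in> C \<Longrightarrow> (remove_path C a ^^ m) h c = (remove_path C a ^^ m) g c"
proof (induction m arbitrary: c)
  case 0
  then show ?case by simp
next
  case (Suc m)
  then show ?case
    using remove_path_cong[of C "(remove_path C a ^^ m) h" "(remove_path C a ^^ m) g"] by simp
qed

lemma outputs_cong:
  assumes "\<And>c. c \<in> C \<Longrightarrow> h c = g c"
  shows "outputs C k h = outputs C k g"
  unfolding outputs_def
  by (intro image_cong refl path_end_cong remove_path_power_cong) (use assms in auto)

lemma path_insert_left:
  assumes left: "\<And>c. c \<in> C \<Longrightarrow> l < c" and pos: "0 < h l"
  shows "path (insert l C) 0 h = insert l (path C (T l (h l)) h)"
proof (intro set_eqI)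
  fix c
  show "c \<in> path (insert l C) 0 h \<longleftrightarrow> c \<in> insert l (path C (T l (h l)) h)"
  proof (cases "c = l")
    case True
    have "\<forall>c'\<in>C. \<not> c' < l"
      using left by (meson less_asym)
    then show ?thesis
      using True pos by (simp add: path_def)
  next
    case False
    then show ?thesis
      using left[of c] pos by (auto simp: path_def)
  qed
qed

lemma path_end_insert_left:
  assumes "finite C" "0 < h l"
  shows "path_end (insert l C) 0 h = path_end C (T l (h l)) h"
proof -
  have "bottoms (insert l C) h = insert (T l (h l)) (bottoms C h)"
    unfolding bottoms_def using assms(2) by auto
  then show ?thesis
    unfolding path_end_def using assms(1) finite_bottoms by (subst Max_insert) auto
qed

lemma outputs_insert_left_Suc:
  assumes fin: "finite C" and left: "\<And>c. c \<in> C \<Longrightarrow> l < c" and h_l: "h l = Suc k"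
  shows "outputs (insert l C) (Suc k) h =
    insert (path_end C (T l (Suc k)) h) (outputs (insert l C) k ((remove_path C (T l (Suc k)) h)(l := k)))"
proof -
  have "l \<notin> path C (T l (Suc k)) h"
    using left path_subset by blast
  moreover have "path (insert l C) 0 h = insert l (path C (T l (Suc k)) h)"
    using path_insert_left[where h = h, OF left] h_l by simp
  ultimately have "remove_path (insert l C) 0 h = (remove_path C (T l (Suc k)) h)(l := k)"
    unfolding remove_path_def lower_def using h_l by (auto intro!: ext)
  then show ?thesis
    using outputs_Suc[of "insert l C" k h] path_end_insert_left[OF fin, of h l] h_l by simp
qed

lemma path_threshold_below_first:
  assumes first: "l1 \<in> C" "\<And>c. c \<in> C \<Longrightarrow> l1 \<le> c" and pos: "0 < h l1"
    and a_le: "a \<le> T l1 (h l1)"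
  shows "path C a h = path C 0 h"
proof -
  have "a \<le> T c (h c)" if c: "c \<in> path C 0 h" for c
  proof (cases "c = l1")
    case False
    then have "l1 < c"
      using first c path_subset le_neq_implies_less by blast
    then have "T l1 (h l1) \<le> T c (h c)"
      using c first(1) pos unfolding path_def by blast
    then show ?thesis
      using a_le by linarith
  qed (use a_le in simp)
  then show ?thesis
    using path_threshold[of C a h] by blast
qed

lemma first_in_path:
  "l1 \<in> C \<Longrightarrow> (\<And>c. c \<in> C \<Longrightarrow> l1 \<le> c) \<Longrightarrow> 0 < h l1 \<Longrightarrow> l1 \<in> path C 0 h"
  unfolding path_def by (auto simp: not_less[symmetric])


lemma outputs_threshold_below_first:
  assumes fin: "finite C" and first: "l1 \<in> C" "\<And>c. c \<in> C \<Longrightarrow> l1 \<le> c"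
    and pos: "0 < h l1" and a_le: "a \<le> T l1 (h l1)"
  shows "outputs C (h l1) h = insert (path_end C a h) (outputs C (h l1 - 1) (remove_path C a h))"
proof -
  have same_path: "path C a h = path C 0 h"
    by (rule path_threshold_below_first[where h = h, OF first pos a_le])
  moreover have "l1 \<in> path C 0 h"
    by (rule first_in_path[where h = h, OF first pos])
  ultimately have "path_end C a h = path_end C 0 h"
    using path_end_threshold[OF fin] by auto
  moreover have "remove_path C a h = remove_path C 0 h"
    unfolding remove_path_def same_path ..
  ultimately show ?thesis
    using outputs_Suc[of C "h l1 - 1" h] pos by simp
qed

lemma outputs_step_insert_left:
  assumes fin: "finite C" and left: "\<And>c. c \<in> C \<Longrightarrow> l < c"
    and first: "l1 \<in> C" "\<And>c. c \<in> C \<Longrightarrow> l1 \<le> c"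
    and row: "\<And>i. 0 < i \<Longrightarrow> i \<le> Z l1 \<Longrightarrow> T l i \<le> T l1 i"
    and adm: "admissible (insert l C) h" and h_l: "h l = Suc k" and le: "h l1 \<le> h l"
  defines "h' \<equiv> (remove_path C (T l (Suc k)) h)(l := k)"
  shows "h' l1 \<le> k \<and> outputs C (h l1) h \<subseteq> insert (path_end C (T l (Suc k)) h) (outputs C (h' l1) h')"
proof -
  let ?x = "T l (Suc k)"
  have "l1 \<noteq> l"
    using first left by blast
  then have h'_l1: "h' l1 = remove_path C ?x h l1"
    unfolding h'_def by simp
  have agree: "\<And>c. c \<in> C \<Longrightarrow> h' c = remove_path C ?x h c"
    using left unfolding h'_def by auto
  have adm_C: "admissible C h"
    using adm unfolding admissible_def by simp
  consider "h l1 = 0" | "0 < h l1" "?x \<le> T l1 (h l1)" | "T l1 (h l1) < ?x"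
    by linarith
  then show ?thesis
  proof cases
    case 1
    then show ?thesis
      using h'_l1 unfolding outputs_def remove_path_def lower_def by auto
  next
    case 2
    have "l1 \<in> path C ?x h"
      using path_threshold_below_first[where h = h, OF first 2] first_in_path[where h = h, OF first 2(1)]
      by simp
    then have "h' l1 = h l1 - 1"
      using h'_l1 unfolding remove_path_def lower_def by simp
    moreover have "outputs C (h l1 - 1) (remove_path C ?x h) = outputs C (h l1 - 1) h'"
      using agree by (intro outputs_cong) simp
    ultimately show ?thesis
      using outputs_threshold_below_first[where h = h, OF fin first 2] le h_l by simp
  next
    case 3
    then have h'_l1_eq: "h' l1 = h l1"
      using h'_l1 by (simp add: remove_path_below_threshold)
    have "h l1 \<le> Z l1"
      using adm first(1) unfolding admissible_def by blast
    then have "h l1 \<noteq> Suc k"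
      using row[of "Suc k"] 3 by auto
    then have "h l1 \<le> k"
      using le h_l by simp
    moreover have "outputs C (h l1) (remove_path C ?x h) = outputs C (h l1) h'"
      using agree by (intro outputs_cong) simp
    ultimately show ?thesis
      using outputs_remove_path_subset[OF fin adm_C, of "h l1" ?x] h'_l1_eq by simp
  qed
qed

text \<open>Scanning from one column further left can only add values: a scan step over
  \<open>insert l C\<close> is a step over \<open>C\<close> with the threshold \<open>T l (h l)\<close>, and by
  \<open>outputs_remove_path_subset\<close> such a step loses at most the value it outputs.\<close>

lemma outputs_subset_insert_left:
  assumes fin: "finite C" and left: "\<And>c. c \<in> C \<Longrightarrow> l < c"
    and first: "l1 \<in> C" "\<And>c. c \<in> C \<Longrightarrow> l1 \<le> c"
    and row: "\<And>i. 0 < i \<Longrightarrow> i \<le> Z l1 \<Longrightarrow> T l i \<le> T l1 i"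
  shows "admissible (insert l C) h \<Longrightarrow> h l1 \<le> h l \<Longrightarrow>
    outputs C (h l1) h \<subseteq> outputs (insert l C) (h l) h"
proof (induction "h l" arbitrary: h)
  case 0
  then show ?case
    unfolding outputs_def by simp
next
  case (Suc k)
  define h' where "h' = (remove_path C (T l (Suc k)) h)(l := k)"
  have adm': "admissible (insert l C) h'"
    using Suc.prems(1) Suc.hyps(2) unfolding admissible_def h'_def remove_path_def lower_def
    by (auto simp: less_imp_le_nat)
  have step: "h' l1 \<le> k \<and>
      outputs C (h l1) h \<subseteq> insert (path_end C (T l (Suc k)) h) (outputs C (h' l1) h')"
    unfolding h'_def
    using outputs_step_insert_left[where h = h, OF fin left first row Suc.prems(1)
        Suc.hyps(2)[symmetric]] Suc.prems(2)
    by blast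
  have "outputs C (h' l1) h' \<subseteq> outputs (insert l C) k h'"
    using Suc.hyps(1)[of h'] adm' step unfolding h'_def by simp
  then show ?case
    using step outputs_insert_left_Suc[where h = h, OF fin left Suc.hyps(2)[symmetric]] Suc.hyps(2)
    unfolding h'_def by auto
qed

end

section \<open>The scanning tableau\<close>

lemma strict_mono_on_atLeastAtMostI:
  fixes f :: "nat \<Rightarrow> 'a::order"
  assumes step: "\<And>i. a \<le> i \<Longrightarrow> Suc i \<le> b \<Longrightarrow> f i < f (Suc i)"
  shows "strict_mono_on {a..b} f"
proof (rule strict_mono_onI)
  fix r s :: nat
  show "r \<in> {a..b} \<Longrightarrow> s \<in> {a..b} \<Longrightarrow> r < s \<Longrightarrow> f r < f s"
  proof (induction s)
    case (Suc s)
    show ?case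
    proof (cases "r = s")
      case True
      then show ?thesis
        using Suc.prems step by simp
    next
      case False
      then have "f r < f s"
        using Suc by simp
      also have "f s < f (Suc s)"
        using Suc.prems False step by simp
      finally show ?thesis .
    qed
  qed simp
qed

text \<open>Otherwise the first \<open>i\<close> values of \<open>g\<close> would lie among the first \<open>i - 1\<close> values of \<open>f\<close>.\<close>

lemma strict_mono_on_le_of_image_subset:
  fixes f g :: "nat \<Rightarrow> 'a::linorder"
  assumes f: "strict_mono_on {1..a} f" and g: "strict_mono_on {1..b} g"
    and sub: "g ` {1..b} \<subseteq> f ` {1..a}" and "b \<le> a" and i: "i \<in> {1..b}"
  shows "f i \<le> g i"
proof (rule ccontr)
  assume "\<not> f i \<le> g i"
  then have less: "g i < f i"
    by simp
  have "g ` {1..i} \<subseteq> f ` {1..<i}"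
  proof
    fix y assume "y \<in> g ` {1..i}"
    then obtain i' where i': "i' \<in> {1..i}" "y = g i'"
      by auto
    then have "g i' \<in> f ` {1..a}"
      using sub i by auto
    then obtain j where j: "j \<in> {1..a}" "g i' = f j"
      by auto
    have "g i' \<le> g i"
      using strict_mono_on_leD[OF g] i' i by auto
    then have "f j < f i"
      using less j by simp
    then have "j < i"
      using strict_mono_on_leD[OF f, of i j] i j \<open>b \<le> a\<close> by (meson atLeastAtMost_iff le_trans leD not_le_imp_less)
    then show "y \<in> f ` {1..<i}"
      using i' j by auto
  qed
  moreover have "inj_on g {1..i}"
    using strict_mono_on_imp_inj_on[OF g] i by (auto elim: inj_on_subset)
  ultimately have "card {1..i} \<le> card (f ` {1..<i})"
    by (metis card_image card_mono finite_imageI finite_atLeastLessThan)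
  also have "\<dots> \<le> card {1..<i}"
    by (rule card_image_le) simp
  finally show False
    using i by auto
qed

lemma zeta_antimono: "j \<le> j' \<Longrightarrow> zeta n lam j' \<le> zeta n lam j"
  unfolding zeta_def by (rule card_mono) auto

lemma zeta_le: "zeta n lam j \<le> n"
proof -
  have "card {i \<in> {1..n}. j \<le> lam i} \<le> card {1..n}"
    by (rule card_mono) auto
  then show ?thesis
    unfolding zeta_def by simp
qed

definition col_len :: "nat \<Rightarrow> (nat \<Rightarrow> nat) \<Rightarrow> nat \<Rightarrow> nat" where
  "col_len n lam c = (if 1 \<le> c \<and> c \<le> lam 1 then zeta n lam c else 0)"

lemma in_shape_iff_col_len: "in_shape n lam j i \<longleftrightarrow> 0 < i \<and> i \<le> col_len n lam j"
  unfolding in_shape_def col_len_def by auto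

lemma col_set_eq_image: "col_set n lam U j = U j ` {1..zeta n lam j}"
  unfolding col_set_def by auto

locale semistandard_tableau =
  fixes n :: nat and lam :: "nat \<Rightarrow> nat" and T :: "nat \<Rightarrow> nat \<Rightarrow> nat"
  assumes tableau: "tableau n lam T"
begin

lemma entry_bounds: "in_shape n lam j i \<Longrightarrow> 1 \<le> T j i \<and> T j i \<le> n"
  using tableau unfolding tableau_def by blast

lemma entry_outside: "\<not> in_shape n lam j i \<Longrightarrow> T j i = 0"
  using tableau unfolding tableau_def by blast

lemma column_step: "in_shape n lam j (Suc i) \<Longrightarrow> T j i < T j (Suc i)"
  using tableau unfolding tableau_def by blast

lemma row_step: "in_shape n lam (Suc j) i \<Longrightarrow> T j i \<le> T (Suc j) i"
  using tableau unfolding tableau_def by blast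

lemma column_strict_mono_on:
  "1 \<le> j \<Longrightarrow> j \<le> lam 1 \<Longrightarrow> strict_mono_on {1..zeta n lam j} (T j)"
  by (rule strict_mono_on_atLeastAtMostI) (auto intro!: column_step simp: in_shape_def)

sublocale strict_columns T "col_len n lam"
  by unfold_locales (auto intro!: column_step simp: in_shape_iff_col_len)

lemma scan_step_upt: "scan_step T [l..<Suc L] = remove_path {l..L} 0"
proof
  fix h
  have "fst ` set (ewis (scan_seq T [l..<Suc L] h)) = path {l..L} 0 h"
  proof (rule set_eqI)
    fix c
    show "c \<in> fst ` set (ewis (scan_seq T [l..<Suc L] h)) \<longleftrightarrow> c \<in> path {l..L} 0 h"
      unfolding ewis_eq_ewis_from_0 mem_ewis_from_scan_seq_iff[OF sorted_wrt_upt] set_upt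
        atLeastLessThanSuc_atLeastAtMost path_def by simp
  qed
  then show "scan_step T [l..<Suc L] h = remove_path {l..L} 0 h"
    unfolding scan_step_def remove_path_def lower_def by (simp add: Let_def)
qed

lemma scan_heights_Suc:
  "scan_heights n lam T l (Suc m) = remove_path {l..lam 1} 0 (scan_heights n lam T l m)"
  unfolding scan_heights_def scan_cols_def scan_step_upt by simp

lemma scan_heights_eq_power:
  "scan_heights n lam T l m = (remove_path {l..lam 1} 0 ^^ m) (scan_heights n lam T l 0)"
  unfolding scan_heights_def scan_cols_def scan_step_upt by simp

lemma admissible_scan_heights: "1 \<le> l \<Longrightarrow> admissible {l..lam 1} (scan_heights n lam T l m)"
proof (induction m)
  case 0
  then show ?case
    unfolding scan_heights_def admissible_def by (auto simp: col_len_def)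
qed (simp add: scan_heights_Suc admissible_remove_path)

lemma scan_heights_first_column:
  assumes "l \<le> lam 1"
  shows "scan_heights n lam T l m l = zeta n lam l - m"
proof (induction m)
  case 0
  then show ?case
    using assms unfolding scan_heights_def by simp
next
  case (Suc m)
  let ?h = "scan_heights n lam T l m"
  have "?h l = 0 \<or> l \<in> path {l..lam 1} 0 ?h"
    using assms by (auto intro: first_in_path)
  then show ?case
    using Suc unfolding scan_heights_Suc remove_path_def lower_def by auto
qed

lemma scan_eq_path_end:
  assumes sh: "in_shape n lam l k"
  shows "scan n lam T l k = path_end {l..lam 1} 0 (scan_heights n lam T l (zeta n lam l - k))"
proof -
  let ?h = "scan_heights n lam T l (zeta n lam l - k)"
  have l: "l \<le> lam 1" and k: "0 < k" "k \<le> zeta n lam l"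
    using sh unfolding in_shape_def by auto
  then have h_l: "?h l = k"
    by (simp add: scan_heights_first_column)
  have "[l..<Suc (lam 1)] = l # [Suc l..<Suc (lam 1)]"
    using l by (simp add: upt_conv_Cons)
  then have "scan_seq T [l..<Suc (lam 1)] ?h = (l, T l k) # scan_seq T [Suc l..<Suc (lam 1)] ?h"
    using h_l k by (simp add: scan_seq_Cons)
  moreover have "scan n lam T l k = snd (last (ewis (scan_seq T [l..<Suc (lam 1)] ?h)))"
    unfolding scan_def scan_path_def scan_cols_def using sh by (simp del: upt_Suc)
  ultimately have "scan n lam T l k = Max (insert (T l k) (snd ` set (scan_seq T [Suc l..<Suc (lam 1)] ?h)))"
    by (simp only: ewis.simps snd_conv last_ewis_from)
  also have "\<dots> = path_end {Suc l..lam 1} (T l (?h l)) ?h"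
    unfolding path_end_def bottoms_def set_scan_seq h_l set_upt atLeastLessThanSuc_atLeastAtMost
    by (simp add: image_image)
  also have "\<dots> = path_end {l..lam 1} 0 ?h"
    using path_end_insert_left[of "{Suc l..lam 1}" ?h l] h_l k l by (simp add: atLeastAtMost_insertL)
  finally show ?thesis .
qed

lemma bottoms_bounds:
  assumes "admissible C h" "b \<in> bottoms C h"
  shows "1 \<le> b \<and> b \<le> n"
proof -
  obtain c where c: "c \<in> C" "0 < h c" "b = T c (h c)"
    using assms(2) unfolding bottoms_def by auto
  then have "in_shape n lam c (h c)"
    using assms(1) unfolding admissible_def in_shape_iff_col_len by auto
  then show ?thesis
    using entry_bounds c(3) by simp
qed


text \<open>Every column whose bottom entry attains the maximum is visited by the EWIS, so after the
  path is removed all bottom entries lie strictly below that maximum.\<close>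

lemma path_end_remove_path_less:
  assumes fin: "finite C" and adm: "admissible C h" and l: "l \<in> C" "0 < h l"
  shows "path_end C 0 (remove_path C 0 h) < path_end C 0 h"
proof -
  let ?\<mu> = "path_end C 0 h" and ?h = "remove_path C 0 h"
  have le_\<mu>: "T c (h c) \<le> ?\<mu>" if "c \<in> C" "0 < h c" for c
    using bottom_le_path_end[where h = h, OF fin that] .
  have "T l (h l) \<in> bottoms C h"
    using l unfolding bottoms_def by blast
  then have "0 < ?\<mu>"
    using le_\<mu>[OF l] bottoms_bounds[OF adm] by fastforce
  moreover have "b < ?\<mu>" if b: "b \<in> bottoms C ?h" for b
  proof -
    obtain c where c: "c \<in> C" "0 < ?h c" "b = T c (?h c)"
      using b unfolding bottoms_def by auto
    then have pos: "0 < h c"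
      using pos_of_lower_pos unfolding remove_path_def by blast
    show ?thesis
    proof (cases "c \<in> path C 0 h")
      case True
      then have "b < T c (h c)"
        using lower_bottom_less[OF adm c(1)] c unfolding remove_path_def by blast
      then show ?thesis
        using le_\<mu>[OF c(1) pos] by simp
    next
      case False
      then have b: "b = T c (h c)"
        using c unfolding remove_path_def by (simp add: lower_notin)
      have "T c (h c) \<noteq> ?\<mu>"
      proof
        assume "T c (h c) = ?\<mu>"
        then have "c \<in> path C 0 h"
          using c(1) pos le_\<mu> unfolding path_def by simp
        then show False
          using False by contradiction
      qed
      then show ?thesis
        using le_\<mu>[OF c(1) pos] b by simp
    qed
  qed
  ultimately show ?thesis
    unfolding path_end_def[of C 0 ?h] using finite_bottoms[OF fin] by simp
qed

lemma entry_le_scan: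
  assumes sh: "in_shape n lam l k"
  shows "T l k \<le> scan n lam T l k"
proof -
  let ?h = "scan_heights n lam T l (zeta n lam l - k)"
  have h_l: "?h l = k"
    using sh by (simp add: scan_heights_first_column in_shape_def)
  then have "T l (?h l) \<le> path_end {l..lam 1} 0 ?h"
    using sh by (intro bottom_le_path_end) (auto simp: in_shape_def)
  then show ?thesis
    using scan_eq_path_end[OF sh] h_l by simp
qed

lemma scan_outside: "\<not> in_shape n lam l k \<Longrightarrow> scan n lam T l k = 0"
  unfolding scan_def by simp

lemma scan_is_entry:
  assumes sh: "in_shape n lam l k"
  obtains c i where "l \<le> c" "in_shape n lam c i" "scan n lam T l k = T c i"
proof -
  let ?h = "scan_heights n lam T l (zeta n lam l - k)"
  have "1 \<le> l"
    using sh unfolding in_shape_def by simp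
  then have adm: "admissible {l..lam 1} ?h"
    by (rule admissible_scan_heights)
  have "0 < scan n lam T l k"
    using entry_le_scan[OF sh] entry_bounds[OF sh] by simp
  then have "path_end {l..lam 1} 0 ?h \<in> bottoms {l..lam 1} ?h"
    using Max_in[of "insert 0 (bottoms {l..lam 1} ?h)"] scan_eq_path_end[OF sh]
    by (auto simp: path_end_def finite_bottoms)
  then obtain c where "c \<in> {l..lam 1}" "0 < ?h c" "scan n lam T l k = T c (?h c)"
    using scan_eq_path_end[OF sh] unfolding bottoms_def by auto
  moreover from this have "in_shape n lam c (?h c)"
    using adm unfolding admissible_def in_shape_iff_col_len by auto
  ultimately show ?thesis
    using that by auto
qed

lemma scan_column_step: "in_shape n lam l (Suc i) \<Longrightarrow> scan n lam T l i < scan n lam T l (Suc i)"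
proof (cases "i = 0")
  case True
  assume "in_shape n lam l (Suc i)"
  then show ?thesis
    using True scan_outside[of l 0] entry_le_scan entry_bounds by (fastforce simp: in_shape_def)
next
  case False
  assume sh: "in_shape n lam l (Suc i)"
  then have sh': "in_shape n lam l i" and l: "1 \<le> l" "l \<le> lam 1"
    using False unfolding in_shape_def by auto
  let ?m = "zeta n lam l - Suc i"
  have "zeta n lam l - i = Suc ?m"
    using sh unfolding in_shape_def by (simp add: Suc_diff_Suc)
  moreover have "scan_heights n lam T l ?m l = Suc i"
    using sh l by (simp add: scan_heights_first_column in_shape_def)
  ultimately show ?thesis
    using path_end_remove_path_less[OF _ admissible_scan_heights[OF l(1)], of l ?m] l
    by (simp add: scan_eq_path_end[OF sh] scan_eq_path_end[OF sh'] scan_heights_Suc)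
qed

lemma scan_column_strict_mono_on:
  "1 \<le> j \<Longrightarrow> j \<le> lam 1 \<Longrightarrow> strict_mono_on {1..zeta n lam j} (scan n lam T j)"
  by (rule strict_mono_on_atLeastAtMostI) (auto intro!: scan_column_step simp: in_shape_def)

lemma col_set_scan_eq_outputs:
  assumes l: "1 \<le> l" "l \<le> lam 1"
  shows "col_set n lam (scan n lam T) l =
    outputs {l..lam 1} (zeta n lam l) (scan_heights n lam T l 0)"
proof -
  let ?z = "zeta n lam l"
  have reverse: "(\<lambda>m. ?z - m) ` {..<?z} = {1..?z}"
  proof
    show "{1..?z} \<subseteq> (\<lambda>m. ?z - m) ` {..<?z}"
    proof
      fix x assume "x \<in> {1..?z}"
      then show "x \<in> (\<lambda>m. ?z - m) ` {..<?z}"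
        by (intro image_eqI[of _ _ "?z - x"]) auto
    qed
  qed auto
  have "col_set n lam (scan n lam T) l = (\<lambda>m. scan n lam T l (?z - m)) ` {..<?z}"
    unfolding col_set_eq_image reverse[symmetric] image_image by (rule refl)
  also have "\<dots> = (\<lambda>m. path_end {l..lam 1} 0 (scan_heights n lam T l m)) ` {..<?z}"
    using l by (intro image_cong refl) (simp add: scan_eq_path_end in_shape_def)
  also have "\<dots> = outputs {l..lam 1} ?z (scan_heights n lam T l 0)"
    unfolding outputs_def by (simp only: scan_heights_eq_power[symmetric])
  finally show ?thesis .
qed

lemma col_set_scan_Suc_subset:
  assumes l: "1 \<le> l" "Suc l \<le> lam 1"
  shows "col_set n lam (scan n lam T) (Suc l) \<subseteq> col_set n lam (scan n lam T) l"
proof -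
  let ?C = "{Suc l..lam 1}" and ?h = "scan_heights n lam T l 0"
  have C: "insert l ?C = {l..lam 1}"
    using l by auto
  have "outputs ?C (?h (Suc l)) ?h \<subseteq> outputs (insert l ?C) (?h l) ?h"
  proof (rule outputs_subset_insert_left)
    show "\<And>i. 0 < i \<Longrightarrow> i \<le> col_len n lam (Suc l) \<Longrightarrow> T l i \<le> T (Suc l) i"
      by (rule row_step) (simp add: in_shape_iff_col_len)
    show "admissible (insert l ?C) ?h"
      unfolding C using admissible_scan_heights[OF l(1)] .
    show "?h (Suc l) \<le> ?h l"
      using l zeta_antimono[of l "Suc l"] unfolding scan_heights_def by simp
  qed (use l in auto)
  moreover have "outputs ?C (?h (Suc l)) ?h = outputs ?C (?h (Suc l)) (scan_heights n lam T (Suc l) 0)"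
    by (rule outputs_cong) (simp add: scan_heights_def)
  ultimately show ?thesis
    using l C col_set_scan_eq_outputs[of l] col_set_scan_eq_outputs[of "Suc l"]
    by (simp add: scan_heights_def)
qed


lemma scan_row_step:
  assumes sh: "in_shape n lam (Suc j) i"
  shows "scan n lam T j i \<le> scan n lam T (Suc j) i"
proof (cases "j = 0")
  case True
  then show ?thesis
    by (simp add: scan_outside in_shape_def)
next
  case False
  then have j: "1 \<le> j" "Suc j \<le> lam 1"
    using sh unfolding in_shape_def by auto
  show ?thesis
  proof (rule strict_mono_on_le_of_image_subset[where f = "scan n lam T j" and g = "scan n lam T (Suc j)"
        and a = "zeta n lam j" and b = "zeta n lam (Suc j)"])
    show "strict_mono_on {1..zeta n lam j} (scan n lam T j)"
      "strict_mono_on {1..zeta n lam (Suc j)} (scan n lam T (Suc j))"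
      using scan_column_strict_mono_on[of j] scan_column_strict_mono_on[of "Suc j"] j by auto
    show "scan n lam T (Suc j) ` {1..zeta n lam (Suc j)} \<subseteq> scan n lam T j ` {1..zeta n lam j}"
      using col_set_scan_Suc_subset[OF j] unfolding col_set_eq_image .
    show "zeta n lam (Suc j) \<le> zeta n lam j"
      by (rule zeta_antimono) simp
    show "i \<in> {1..zeta n lam (Suc j)}"
      using sh unfolding in_shape_def by auto
  qed
qed

lemma tableau_scan: "tableau n lam (scan n lam T)"
  unfolding tableau_def
proof (intro conjI allI impI)
  fix j i assume sh: "in_shape n lam j i"
  show "1 \<le> scan n lam T j i"
    using entry_le_scan[OF sh] entry_bounds[OF sh] by simp
  obtain c i' where "in_shape n lam c i'" "scan n lam T j i = T c i'"
    using scan_is_entry[OF sh] .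
  then show "scan n lam T j i \<le> n"
    using entry_bounds by simp
qed (simp_all add: scan_outside scan_column_step scan_row_step)

lemma is_key_scan: "is_key n lam (scan n lam T)"
  unfolding is_key_def
proof (intro conjI allI impI)
  show "tableau n lam (scan n lam T)"
    by (rule tableau_scan)
  fix l j assume "1 \<le> l \<and> l \<le> j \<and> j \<le> lam 1"
  then show "col_set n lam (scan n lam T) j \<subseteq> col_set n lam (scan n lam T) l"
  proof (induction j)
    case (Suc j)
    show ?case
    proof (cases "l = Suc j")
      case False
      then show ?thesis
        using Suc col_set_scan_Suc_subset[of j] by force
    qed simp
  qed simp
qed

lemma tab_le_scan: "tab_le T (scan n lam T)"
  unfolding tab_le_def
proof (intro allI)
  fix j i
  show "T j i \<le> scan n lam T j i"
    by (cases "in_shape n lam j i") (simp_all add: entry_le_scan entry_outside)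
qed

lemma col_set_scan_subset_if_key:
  assumes key: "is_key n lam T" and j: "1 \<le> j" "j \<le> lam 1"
  shows "col_set n lam (scan n lam T) j \<subseteq> col_set n lam T j"
proof
  fix y assume "y \<in> col_set n lam (scan n lam T) j"
  then obtain k where "in_shape n lam j k" "y = scan n lam T j k"
    using j unfolding col_set_def in_shape_def by auto
  then obtain c k' where c: "j \<le> c" "in_shape n lam c k'" "y = T c k'"
    using scan_is_entry by metis
  then have "y \<in> col_set n lam T c"
    unfolding col_set_def in_shape_def by auto
  moreover have "col_set n lam T c \<subseteq> col_set n lam T j"
    using key c(1,2) j unfolding is_key_def in_shape_def by auto
  ultimately show "y \<in> col_set n lam T j"
    by blast
qed

text \<open>For a key the scanned column is a subset of the original one of the same size, hence
  equal to it, and two increasing enumerations of the same set coincide.\<close>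

lemma scan_eq_self_if_key:
  assumes key: "is_key n lam T"
  shows "scan n lam T = T"
proof (intro ext)
  fix j i
  show "scan n lam T j i = T j i"
  proof (cases "in_shape n lam j i")
    case False
    then show ?thesis
      by (simp add: scan_outside entry_outside)
  next
    case sh: True
    then have j: "1 \<le> j" "j \<le> lam 1" and i: "i \<in> {1..zeta n lam j}"
      unfolding in_shape_def by auto
    let ?I = "{1..zeta n lam j}"
    have "card (scan n lam T j ` ?I) = card (T j ` ?I)"
      using strict_mono_on_imp_inj_on[OF scan_column_strict_mono_on[OF j]]
        strict_mono_on_imp_inj_on[OF column_strict_mono_on[OF j]] by (simp add: card_image)
    then have "scan n lam T j ` ?I = T j ` ?I"
      using col_set_scan_subset_if_key[OF key j] unfolding col_set_eq_image
      by (intro card_subset_eq) auto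
    then have "scan n lam T j i \<le> T j i"
      using strict_mono_on_le_of_image_subset[OF scan_column_strict_mono_on[OF j]
          column_strict_mono_on[OF j] _ order.refl i] by simp
    then show ?thesis
      using entry_le_scan[OF sh] by simp
  qed
qed

end

section \<open>Keys of permutations and Demazure tableaux\<close>

context
  fixes n :: nat and lam :: "nat \<Rightarrow> nat" and p :: "nat \<Rightarrow> nat"
  assumes perm: "p permutes {1..n}"
begin

lemma card_prefix_image: "card (p ` {1..zeta n lam j}) = zeta n lam j"
  using permutes_inj[OF perm] by (simp add: card_image inj_on_subset)

lemma prefix_image_subset: "p ` {1..zeta n lam j} \<subseteq> {1..n}"
  using permutes_image[OF perm] zeta_le[of n lam j] by auto

lemma key_of_in_shape:
  "in_shape n lam j i \<Longrightarrow> key_of n lam p j i = sorted_list_of_set (p ` {1..zeta n lam j}) ! (i - 1)"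
  unfolding key_of_def by simp

lemma key_of_strict_mono_on:
  assumes "1 \<le> j" "j \<le> lam 1"
  shows "strict_mono_on {1..zeta n lam j} (key_of n lam p j)"
proof (rule strict_mono_onI)
  fix i i' assume "i \<in> {1..zeta n lam j}" "i' \<in> {1..zeta n lam j}" "i < i'"
  moreover have "sorted_wrt (<) (sorted_list_of_set (p ` {1..zeta n lam j}))"
    by (rule strict_sorted_list_of_set)
  ultimately show "key_of n lam p j i < key_of n lam p j i'"
    using assms card_prefix_image[of j]
    by (simp add: key_of_in_shape in_shape_def sorted_wrt_nth_less)
qed

lemma col_set_key_of:
  assumes "1 \<le> j" "j \<le> lam 1"
  shows "col_set n lam (key_of n lam p) j = p ` {1..zeta n lam j}"
proof -
  let ?xs = "sorted_list_of_set (p ` {1..zeta n lam j})"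
  have len: "length ?xs = zeta n lam j"
    using card_prefix_image[of j] by simp
  have set_xs: "set ?xs = p ` {1..zeta n lam j}"
    by simp
  show ?thesis
  proof (intro set_eqI iffI)
    fix y assume "y \<in> col_set n lam (key_of n lam p) j"
    then obtain i where i: "1 \<le> i" "i \<le> zeta n lam j" "y = key_of n lam p j i"
      unfolding col_set_def by auto
    then have "y = ?xs ! (i - 1)"
      using assms by (simp add: key_of_in_shape in_shape_def)
    moreover have "i - 1 < length ?xs"
      using i len by simp
    ultimately show "y \<in> p ` {1..zeta n lam j}"
      using set_xs nth_mem by blast
  next
    fix y assume "y \<in> p ` {1..zeta n lam j}"
    then obtain k where k: "k < length ?xs" "y = ?xs ! k"
      using set_xs by (metis in_set_conv_nth)
    then have "y = key_of n lam p j (Suc k)"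
      using assms len by (simp add: key_of_in_shape in_shape_def)
    then show "y \<in> col_set n lam (key_of n lam p) j"
      using k len unfolding col_set_def by (intro CollectI exI[of _ "Suc k"]) simp
  qed
qed

lemma key_of_column_step:
  assumes sh: "in_shape n lam j (Suc i)"
  shows "key_of n lam p j i < key_of n lam p j (Suc i)"
proof (cases "i = 0")
  case True
  have "key_of n lam p j (Suc i) \<in> p ` {1..zeta n lam j}"
    using sh col_set_key_of unfolding col_set_def in_shape_def by fastforce
  then show ?thesis
    using True prefix_image_subset[of j] by (force simp: key_of_def in_shape_def)
next
  case False
  then show ?thesis
    using sh strict_mono_onD[OF key_of_strict_mono_on] by (simp add: in_shape_def)
qed

lemma key_of_row_step:
  assumes sh: "in_shape n lam (Suc j) i"
  shows "key_of n lam p j i \<le> key_of n lam p (Suc j) i"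
proof (cases "j = 0")
  case True
  then show ?thesis
    by (simp add: key_of_def in_shape_def)
next
  case False
  then have j: "1 \<le> j" "Suc j \<le> lam 1"
    using sh unfolding in_shape_def by auto
  have zeta_le: "zeta n lam (Suc j) \<le> zeta n lam j"
    by (rule zeta_antimono) simp
  show ?thesis
  proof (rule strict_mono_on_le_of_image_subset[where f = "key_of n lam p j"
        and g = "key_of n lam p (Suc j)" and a = "zeta n lam j" and b = "zeta n lam (Suc j)"])
    show "strict_mono_on {1..zeta n lam j} (key_of n lam p j)"
      "strict_mono_on {1..zeta n lam (Suc j)} (key_of n lam p (Suc j))"
      using key_of_strict_mono_on[of j] key_of_strict_mono_on[of "Suc j"] j by auto
    show "key_of n lam p (Suc j) ` {1..zeta n lam (Suc j)} \<subseteq> key_of n lam p j ` {1..zeta n lam j}"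
      using col_set_key_of[of j] col_set_key_of[of "Suc j"] j zeta_le
      unfolding col_set_eq_image by auto
    show "i \<in> {1..zeta n lam (Suc j)}"
      using sh unfolding in_shape_def by auto
  qed (rule zeta_le)
qed

lemma tableau_key_of: "tableau n lam (key_of n lam p)"
  unfolding tableau_def
proof (intro conjI allI impI)
  fix j i assume sh: "in_shape n lam j i"
  then have "key_of n lam p j i \<in> col_set n lam (key_of n lam p) j"
    unfolding col_set_def in_shape_def by auto
  then have "key_of n lam p j i \<in> {1..n}"
    using col_set_key_of sh prefix_image_subset unfolding in_shape_def by blast
  then show "1 \<le> key_of n lam p j i" "key_of n lam p j i \<le> n"
    by auto
next
  fix j i assume "\<not> in_shape n lam j i"
  then show "key_of n lam p j i = 0"
    unfolding key_of_def by simp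
qed (simp_all add: key_of_column_step key_of_row_step)

lemma is_key_key_of: "is_key n lam (key_of n lam p)"
  unfolding is_key_def
proof (intro conjI allI impI)
  fix l j assume "1 \<le> l \<and> l \<le> j \<and> j \<le> lam 1"
  then show "col_set n lam (key_of n lam p) j \<subseteq> col_set n lam (key_of n lam p) l"
    using col_set_key_of[of j] col_set_key_of[of l] zeta_antimono[of l j n lam] by auto
qed (rule tableau_key_of)

end

lemma sorted_list_of_set_image_strict_mono_on:
  fixes s :: "nat \<Rightarrow> 'a::linorder"
  assumes "strict_mono_on {c..d} s"
  shows "sorted_list_of_set (s ` {c..d}) = map s [c..<Suc d]"
proof -
  have "sorted_wrt (\<lambda>x y. s x < s y) [c..<Suc d]"
    by (rule sorted_wrt_mono_rel[OF _ sorted_wrt_upt]) (use assms in \<open>auto intro: strict_mono_onD\<close>)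
  then have "sorted_wrt (<) (map s [c..<Suc d])"
    by (simp add: sorted_wrt_map)
  moreover have "set (map s [c..<Suc d]) = s ` {c..d}"
    by auto
  ultimately show ?thesis
    by (metis strict_sorted_equal strict_sorted_list_of_set finite_imageI finite_atLeastAtMost
        set_sorted_list_of_set)
qed

lemma R_perm_strict_mono_on:
  assumes \<sigma>: "R_perm n lam \<sigma>" and "b \<le> n" and no_cut: "\<forall>q\<in>R_set n lam. \<not> (a < q \<and> q < b)"
  shows "strict_mono_on {Suc a..b} \<sigma>"
proof (rule strict_mono_onI)
  fix i1 i2 assume i12: "i1 \<in> {Suc a..b}" "i2 \<in> {Suc a..b}" "i1 < i2"
  then have "\<forall>q\<in>R_set n lam. \<not> (i1 \<le> q \<and> q < i2)"
    using no_cut by fastforce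
  moreover have "1 \<le> i1" "i2 \<le> n"
    using i12 \<open>b \<le> n\<close> by auto
  ultimately show "\<sigma> i1 < \<sigma> i2"
    using \<sigma> i12(3) unfolding R_perm_def by blast
qed

lemma R_perm_block:
  assumes i: "i \<in> {1..n}"
  obtains a b where "a < i" "i \<le> b" "b \<le> n"
    "a \<in> insert 0 (R_set n lam)" "b \<in> insert n (R_set n lam)"
    "\<forall>q\<in>R_set n lam. \<not> (a < q \<and> q < b)"
proof -
  let ?R = "R_set n lam"
  let ?A = "insert 0 {q \<in> ?R. q < i}" and ?B = "insert n {q \<in> ?R. i \<le> q}"
  have "?R \<subseteq> {..<n}"
    unfolding R_set_def by auto
  then have "finite ?R"
    using finite_subset by blast
  then have fin: "finite ?A" "finite ?B"
    by auto
  have A: "Max ?A \<in> ?A"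
    by (rule Max_in[OF fin(1)]) simp
  have B: "Min ?B \<in> ?B"
    by (rule Min_in[OF fin(2)]) simp
  have no_cut: "\<not> (Max ?A < q \<and> q < Min ?B)" if "q \<in> ?R" for q
  proof (cases "q < i")
    case True
    then have "q \<le> Max ?A"
      by (intro Max_ge[OF fin(1)]) (simp add: that)
    then show ?thesis
      by linarith
  next
    case False
    then have "Min ?B \<le> q"
      by (intro Min_le[OF fin(2)]) (simp add: that)
    then show ?thesis
      by linarith
  qed
  show ?thesis
  proof (rule that)
    show "Max ?A < i" "Max ?A \<in> insert 0 ?R"
      using A i by auto
    show "i \<le> Min ?B" "Min ?B \<in> insert n ?R"
      using B i by auto
    show "Min ?B \<le> n"
      using fin by simp
  qed (use no_cut in blast)
qed

lemma R_perm_eq_if_prefix_images_eq: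
  assumes s: "R_perm n lam s" and t: "R_perm n lam t"
    and eq: "\<And>q. q \<in> R_set n lam \<Longrightarrow> s ` {1..q} = t ` {1..q}"
  shows "s = t"
proof
  fix i
  have ps: "s permutes {1..n}" and pt: "t permutes {1..n}"
    using s t unfolding R_perm_def by auto
  show "s i = t i"
  proof (cases "i \<in> {1..n}")
    case False
    then show ?thesis
      using permutes_not_in[OF ps] permutes_not_in[OF pt] by simp
  next
    case True
    then obtain a b where ab: "a < i" "i \<le> b" "b \<le> n"
      "a \<in> insert 0 (R_set n lam)" "b \<in> insert n (R_set n lam)"
      "\<forall>q\<in>R_set n lam. \<not> (a < q \<and> q < b)"
      using R_perm_block[where lam = lam] by blast
    have "s ` {1..a} = t ` {1..a}" "s ` {1..b} = t ` {1..b}"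
      using ab(4,5) eq permutes_image[OF ps] permutes_image[OF pt] by auto
    moreover have "{Suc a..b} = {1..b} - {1..a}"
      by auto
    ultimately have "s ` {Suc a..b} = t ` {Suc a..b}"
      using permutes_inj[OF ps] permutes_inj[OF pt] by (simp add: image_set_diff)
    then have "map s [Suc a..<Suc b] = map t [Suc a..<Suc b]"
      using sorted_list_of_set_image_strict_mono_on[OF R_perm_strict_mono_on[OF s ab(3,6)]]
        sorted_list_of_set_image_strict_mono_on[OF R_perm_strict_mono_on[OF t ab(3,6)]] by simp
    then show ?thesis
      using ab(1,2) by (cases "i = b") (auto simp: map_eq_conv)
  qed
qed

lemma key_of_inj_on_R_perm:
  assumes s: "R_perm n lam s" and t: "R_perm n lam t" and eq: "key_of n lam s = key_of n lam t"
  shows "s = t"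
proof (rule R_perm_eq_if_prefix_images_eq[OF s t])
  fix q assume "q \<in> R_set n lam"
  then obtain j where "1 \<le> j" "j \<le> lam 1" "q = zeta n lam j"
    unfolding R_set_def by auto
  then show "s ` {1..q} = t ` {1..q}"
    using col_set_key_of[of s n] col_set_key_of[of t n] s t eq unfolding R_perm_def by metis
qed

lemma tab_le_refl: "tab_le U U"
  unfolding tab_le_def by simp

lemma tab_le_trans: "tab_le U V \<Longrightarrow> tab_le V W \<Longrightarrow> tab_le U W"
  unfolding tab_le_def using order_trans by blast

lemma tab_le_antisym: "tab_le U V \<Longrightarrow> tab_le V U \<Longrightarrow> U = V"
  unfolding tab_le_def by (intro ext) (meson antisym)

lemma key_of_mem_demazure:
  assumes "R_perm n lam \<sigma>"
  shows "key_of n lam \<sigma> \<in> demazure n lam \<sigma>"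
proof -
  have perm: "\<sigma> permutes {1..n}"
    using assms unfolding R_perm_def by simp
  interpret semistandard_tableau n lam "key_of n lam \<sigma>"
    using tableau_key_of[OF perm] by unfold_locales
  show ?thesis
    unfolding demazure_def tableaux_def
    using tableau_key_of[OF perm] scan_eq_self_if_key[OF is_key_key_of[OF perm]] tab_le_refl by simp
qed

lemma demazure_subset_below: "demazure n lam \<sigma> \<subseteq> below n lam (key_of n lam \<sigma>)"
proof
  fix U assume "U \<in> demazure n lam \<sigma>"
  then have U: "tableau n lam U" and "tab_le (scan n lam U) (key_of n lam \<sigma>)"
    unfolding demazure_def tableaux_def by auto
  interpret semistandard_tableau n lam U
    using U by unfold_locales
  show "U \<in> below n lam (key_of n lam \<sigma>)"
    unfolding below_def tableaux_def using U tab_le_scan tab_le_trans \<open>tab_le (scan n lam U) _\<close> by blast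
qed

lemma is_maximal_in_demazure_iff:
  assumes "R_perm n lam \<sigma>"
  shows "is_maximal_in (demazure n lam \<sigma>) U \<longleftrightarrow> U = key_of n lam \<sigma>"
  using key_of_mem_demazure[OF assms] demazure_subset_below[of n lam \<sigma>] tab_le_antisym
  unfolding is_maximal_in_def below_def by blast

lemma demazure_inj_on_R_perm:
  assumes "R_perm n lam \<sigma>" "R_perm n lam \<sigma>'" "demazure n lam \<sigma> = demazure n lam \<sigma>'"
  shows "\<sigma> = \<sigma>'"
  using is_maximal_in_demazure_iff[OF assms(1)] is_maximal_in_demazure_iff[OF assms(2)] assms
  by (metis key_of_inj_on_R_perm)

theorem fact6p1:
  fixes n :: nat and lam :: "nat \<Rightarrow> nat" and T Y :: "nat \<Rightarrow> nat \<Rightarrow> nat" and \<pi> :: "nat \<Rightarrow> nat"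
  assumes "1 \<le> n"
    and "is_partition n lam"
    and "T \<in> tableaux n lam"
    and "is_key n lam Y"
    and "R_perm n lam \<pi>"
  shows "is_key n lam (scan n lam T) \<and>
         (tab_le T (scan n lam T) \<and> scan n lam Y = Y) \<and>
         (key_of n lam \<pi> \<in> demazure n lam \<pi> \<and> demazure n lam \<pi> \<subseteq> below n lam (key_of n lam \<pi>)) \<and>
         (is_maximal_in (demazure n lam \<pi>) (key_of n lam \<pi>) \<and>
         (\<forall>U. is_maximal_in (demazure n lam \<pi>) U \<longrightarrow> U = key_of n lam \<pi>)) \<and>
         ((\<forall>\<sigma>. R_perm n lam \<sigma> \<longrightarrow> demazure n lam \<sigma> \<noteq> {} \<and> demazure n lam \<sigma> \<subseteq> tableaux n lam) \<and>
         (\<forall>\<sigma> \<sigma>'. R_perm n lam \<sigma> \<and> R_perm n lam \<sigma>' \<and> \<sigma> \<noteq> \<sigma>' \<longrightarrow> demazure n lam \<sigma> \<noteq> demazure n lam \<sigma>'))"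
proof -
  interpret T: semistandard_tableau n lam T
    using assms(3) unfolding tableaux_def by unfold_locales simp
  interpret Y: semistandard_tableau n lam Y
    using assms(4) unfolding is_key_def by unfold_locales simp
  have "demazure n lam \<sigma> \<noteq> {} \<and> demazure n lam \<sigma> \<subseteq> tableaux n lam" if "R_perm n lam \<sigma>" for \<sigma>
    using key_of_mem_demazure[OF that] unfolding demazure_def by blast
  then show ?thesis
    using T.is_key_scan T.tab_le_scan Y.scan_eq_self_if_key[OF assms(4)]
      key_of_mem_demazure[OF assms(5)] demazure_subset_below
      is_maximal_in_demazure_iff[OF assms(5)] demazure_inj_on_R_perm
    by blast
qed

end
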